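(* Let $\mathbb K\in\{\mathbb R,\mathbb C\}$ and let $(g(x))_{x\ge0}$ be a semigroup of invertible linear maps on $\mathbb K^d$. For each $x\ge0$ let $g(x)=D(x)T(x)$ be the multiplicative Jordan–Chevalley decomposition of $g(x)$. Then $(D(x))_{x\ge0}$ and $(T(x))_{x\ge0}$ are each semigroups, and $T(x)D(y)=D(y)T(x)$ for all $x,y\ge0$.
   Context: A semigroup is a map $g:[0,\infty)\to L(\mathbb K^d)$ with $g(0)=\mathrm{id}$ and $g(x+y)=g(x)g(y)$ for all $x,y\ge0$. The multiplicative Jordan–Chevalley decomposition of an invertible linear map $A$ on $\mathbb K^d$ is the unique factorization $A=DT$ with $D$ diagonalizable (over $\mathbb C$), $T$ unipotent (i.e. $T-\mathrm{id}$ nilpotent), and $DT=TD$. *)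

theory Defs
  imports "HOL-Analysis.Analysis"
begin

text \<open>Linear maps on K^d are represented by d x d matrices (type 'a^'n^'n,
  d = CARD('n)).\<close>

definition is_semigroup :: "(real \<Rightarrow> 'a::semiring_1^'n^'n) \<Rightarrow> bool" where
  "is_semigroup g \<longleftrightarrow> g 0 = mat 1 \<and>
     (\<forall>x y. 0 \<le> x \<longrightarrow> 0 \<le> y \<longrightarrow> g (x + y) = g x ** g y)"

definition map_mat :: "('a \<Rightarrow> 'b) \<Rightarrow> 'a^'n^'m \<Rightarrow> 'b^'n^'m" where
  "map_mat f A = (\<chi> i j. f (A $ i $ j))"

definition diagonalizable_C :: "complex^'n^'n \<Rightarrow> bool" where
  "diagonalizable_C A \<longleftrightarrow> (\<exists>P L::complex^'n^'n. invertible P \<and>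
     (\<forall>i j. i \<noteq> j \<longrightarrow> L $ i $ j = 0) \<and> A = P ** L ** matrix_inv P)"

definition nilpotent_mat :: "'a::semiring_1^'n^'n \<Rightarrow> bool" where
  "nilpotent_mat N \<longleftrightarrow> (\<exists>k. ((\<lambda>M. M ** N) ^^ k) (mat 1) = (0::'a^'n^'n))"

definition unipotent :: "'a::ring_1^'n^'n \<Rightarrow> bool" where
  "unipotent T \<longleftrightarrow> nilpotent_mat (T - mat 1)"

text \<open>Multiplicative Jordan-Chevalley decomposition A = D T; the map emb embeds the
  scalar field K (R or C) into C, so that diagonalizability is taken over C.\<close>
definition mult_JC_decomp ::
  "('a::field \<Rightarrow> complex) \<Rightarrow> 'a^'n^'n \<Rightarrow> 'a^'n^'n \<Rightarrow> 'a^'n^'n \<Rightarrow> bool" where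
  "mult_JC_decomp emb A D T \<longleftrightarrow> diagonalizable_C (map_mat emb D) \<and> unipotent T \<and>
     D ** T = T ** D \<and> A = D ** T"

end

theory Submission
  imports Defs
begin

text \<open>
  If \<open>A = D T\<close> is the Jordan--Chevalley decomposition of an invertible complex matrix, the
  eigenspaces of \<open>D\<close> are exactly the generalized eigenspaces of \<open>A\<close>, because \<open>T\<close> is unipotent
  and commutes with \<open>D\<close>. Hence \<open>D\<close> and \<open>T\<close> are determined by \<open>A\<close> and commute with every
  matrix commuting with \<open>A\<close>; as the \<open>g(x)\<close> commute, so do all the \<open>D(x)\<close> and \<open>T(y)\<close>. On a
  joint eigenvector of \<open>D(x)\<close> and \<open>D(y)\<close> with eigenvalues \<open>\<mu>, \<nu>\<close>, the matrix
  \<open>g(x+y) = D(x) D(y) T(x) T(y)\<close> acts as \<open>\<mu>\<nu>\<close> times a unipotent map, so the vector is an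
  eigenvector of \<open>D(x+y)\<close> for \<open>\<mu>\<nu>\<close>. Joint eigenvectors span, so \<open>D(x+y) = D(x) D(y)\<close>, and
  cancelling \<open>D(x+y)\<close> in \<open>g(x+y) = D(x+y) T(x+y)\<close> gives \<open>T(x+y) = T(x) T(y)\<close>. Real
  matrices are handled by complexification.
\<close>

lemma matrix_add_rdistrib: "((A::'a::semiring_1^'n^'m) + B) ** C = A ** C + B ** C"
  by (vector matrix_matrix_mult_def sum.distrib distrib_right)

lemma matrix_diff_rdistrib: "((A::'a::ring_1^'n^'m) - B) ** C = A ** C - B ** C"
  by (vector matrix_matrix_mult_def sum_subtractf left_diff_distrib)

lemma matrix_diff_ldistrib: "(C::'a::ring_1^'n^'m) ** (A - B) = C ** A - C ** B"
  by (vector matrix_matrix_mult_def sum_subtractf right_diff_distrib)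

lemma mat_matrix_mult_commute: "(mat c::'a::comm_semiring_1^'n^'n) ** A = A ** mat c"
  by (simp add: matrix_matrix_mult_def mat_def vec_eq_iff if_distrib if_distribR mult.commute
      cong: if_cong)

lemma mat_matrix_vector_mult: "(mat c::'a::comm_semiring_1^'n^'n) *v v = c *s v"
  by (simp add: matrix_vector_mult_def mat_def vec_eq_iff if_distrib if_distribR cong: if_cong)

lemma mat_diff_matrix_vector_mult:
  "((A::'a::comm_ring_1^'n^'n) - mat c) *v v = A *v v - c *s v"
  by (simp add: matrix_vector_mult_diff_rdistrib mat_matrix_vector_mult)

lemma matrix_vector_mult_sum:
  "finite S \<Longrightarrow> (M::'a::semiring_1^'n^'m) *v (\<Sum>i\<in>S. f i) = (\<Sum>i\<in>S. M *v f i)"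
  by (induct S rule: finite_induct) (auto simp: matrix_vector_right_distrib)

lemma matrix_inv_right: "invertible (P::'a::semiring_1^'n^'n) \<Longrightarrow> P ** matrix_inv P = mat 1"
  and matrix_inv_left: "invertible (P::'a::semiring_1^'n^'n) \<Longrightarrow> matrix_inv P ** P = mat 1"
  using someI_ex[of "\<lambda>Q. P ** Q = mat 1 \<and> Q ** P = mat 1"] by (auto simp: matrix_inv_def invertible_def)

lemma invertible_mult_left_cancel:
  assumes "invertible (D::'a::semiring_1^'n^'n)" "D ** M = D ** N"
  shows "M = N"
  by (metis assms matrix_inv_left matrix_mul_assoc matrix_mul_lid)

lemma matrix_mult_commute_diff_mat:
  "X ** A = A ** X \<Longrightarrow> (X::'a::comm_ring_1^'n^'n) ** (A - mat c) = (A - mat c) ** X"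
  by (simp add: matrix_diff_ldistrib matrix_diff_rdistrib mat_matrix_mult_commute)

section \<open>Matrix powers and nilpotency\<close>

definition matpow :: "'a::semiring_1^'n^'n \<Rightarrow> nat \<Rightarrow> 'a^'n^'n" where
  "matpow N k = ((\<lambda>M. M ** N) ^^ k) (mat 1)"

lemma matpow_0 [simp]: "matpow N 0 = mat 1"
  by (simp add: matpow_def)

lemma matpow_Suc: "matpow N (Suc k) = matpow N k ** N"
  by (simp add: matpow_def)

lemma matpow_Suc_vector: "matpow N (Suc k) *v v = matpow N k *v (N *v v)"
  by (simp add: matpow_Suc matrix_vector_mul_assoc)

lemma nilpotent_mat_iff_matpow: "nilpotent_mat N \<longleftrightarrow> (\<exists>k. matpow N k = 0)"
  by (simp add: nilpotent_mat_def matpow_def)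

lemma matpow_commute:
  assumes "C ** M = M ** (C::'a::semiring_1^'n^'n)"
  shows "C ** matpow M k = matpow M k ** C"
proof (induct k)
  case (Suc k)
  have "C ** matpow M (Suc k) = (C ** matpow M k) ** M"
    by (simp add: matpow_Suc matrix_mul_assoc)
  also have "\<dots> = matpow M (Suc k) ** C"
    by (simp add: Suc assms matpow_Suc flip: matrix_mul_assoc)
  finally show ?case .
qed simp

lemma matpow_mult_commute:
  assumes "A ** B = B ** (A::'a::semiring_1^'n^'n)"
  shows "matpow (A ** B) k = matpow A k ** matpow B k"
proof (induct k)
  case (Suc k)
  have "matpow B k ** A = A ** matpow B k"
    using matpow_commute[of A B k] assms by simp
  then show ?case
    by (simp add: matpow_Suc Suc matrix_mul_assoc) (simp flip: matrix_mul_assoc)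
qed simp

text \<open>The shape \<open>C A\<^sup>m + D B\<^sup>n\<close>, with the free factors on the left, survives right
  multiplication by \<open>A + B\<close>, because powers of \<open>B\<close> commute with \<open>A\<close>.\<close>

lemma matpow_add_commute_split:
  fixes A B :: "'a::comm_ring_1^'n^'n"
  assumes AB: "A ** B = B ** A"
  shows "\<exists>C D. matpow (A + B) (m + n) = C ** matpow A m + D ** matpow B n"
proof (induct m arbitrary: n)
  case 0
  show ?case by (rule exI[of _ "matpow (A + B) n"], rule exI[of _ 0]) simp
next
  case (Suc m)
  note IH_m = Suc.hyps
  show ?case
  proof (induct n)
    case 0
    show ?case by (rule exI[of _ 0], rule exI[of _ "matpow (A + B) (Suc m)"]) simp
  next
    case (Suc n)
    obtain C1 D1 where IH1: "matpow (A + B) (m + Suc n) = C1 ** matpow A m + D1 ** matpow B (Suc n)"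
      using IH_m by blast
    obtain C2 D2 where IH2: "matpow (A + B) (Suc m + n) = C2 ** matpow A (Suc m) + D2 ** matpow B n"
      using Suc.hyps by blast
    have "matpow B (Suc n) ** A = A ** matpow B (Suc n)" "matpow A (Suc m) ** B = B ** matpow A (Suc m)"
      using matpow_commute[of A B] matpow_commute[of B A] AB by simp_all
    then have
      "C1 ** matpow A m ** A = C1 ** matpow A (Suc m)" "D1 ** matpow B (Suc n) ** A = D1 ** A ** matpow B (Suc n)"
      "C2 ** matpow A (Suc m) ** B = C2 ** B ** matpow A (Suc m)" "D2 ** matpow B n ** B = D2 ** matpow B (Suc n)"
      by (simp_all add: matpow_Suc flip: matrix_mul_assoc)
    moreover have "matpow (A + B) (Suc m + Suc n) = matpow (A + B) (m + Suc n) ** A + matpow (A + B) (Suc m + n) ** B"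
      by (simp add: matpow_Suc matrix_add_ldistrib)
    ultimately have "matpow (A + B) (Suc m + Suc n) = (C1 + C2 ** B) ** matpow A (Suc m) + (D1 ** A + D2) ** matpow B (Suc n)"
      unfolding IH1 IH2 by (simp add: matrix_add_rdistrib add_ac)
    then show ?case by blast
  qed
qed

lemma nilpotent_mat_add:
  fixes A B :: "'a::comm_ring_1^'n^'n"
  assumes "A ** B = B ** A" "nilpotent_mat A" "nilpotent_mat B"
  shows "nilpotent_mat (A + B)"
proof -
  obtain a b where "matpow A a = 0" "matpow B b = 0"
    using assms by (auto simp: nilpotent_mat_iff_matpow)
  moreover obtain C D where "matpow (A + B) (a + b) = C ** matpow A a + D ** matpow B b"
    using matpow_add_commute_split[OF assms(1)] by blast
  ultimately show ?thesis by (auto simp: nilpotent_mat_iff_matpow)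
qed

lemma nilpotent_mat_mult_commute:
  assumes "A ** B = B ** (A::'a::comm_ring_1^'n^'n)" "nilpotent_mat A"
  shows "nilpotent_mat (A ** B)"
proof -
  obtain k where "matpow A k = 0"
    using assms(2) by (auto simp: nilpotent_mat_iff_matpow)
  then have "matpow (A ** B) k = 0"
    by (simp add: matpow_mult_commute[OF assms(1)])
  then show ?thesis by (auto simp: nilpotent_mat_iff_matpow)
qed

lemma unipotent_mult:
  fixes A B :: "'a::comm_ring_1^'n^'n"
  assumes AB: "A ** B = B ** A" and "unipotent A" "unipotent B"
  shows "unipotent (A ** B)"
proof -
  have split: "A ** B - mat 1 = (A - mat 1) ** B + (B - mat 1)"
    by (simp add: matrix_diff_rdistrib)
  have "nilpotent_mat ((A - mat 1) ** B)"
    using assms by (intro nilpotent_mat_mult_commute)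
      (simp_all add: matrix_diff_rdistrib matrix_diff_ldistrib unipotent_def)
  moreover have "((A - mat 1) ** B) ** (B - mat 1) = (B - mat 1) ** ((A - mat 1) ** B)"
    by (simp add: matrix_diff_rdistrib matrix_diff_ldistrib AB matrix_mul_assoc)
      (simp add: AB flip: matrix_mul_assoc)
  ultimately show ?thesis
    using assms unfolding unipotent_def split by (intro nilpotent_mat_add)
qed

lemma matpow_vector_on_invariant:
  fixes X M :: "'a::field^'n^'n"
  assumes "\<forall>w\<in>S. X *v w = c *s (M *v w)" "\<forall>w\<in>S. M *v w \<in> S" "w \<in> S"
  shows "matpow X k *v w = c ^ k *s (matpow M k *v w)"
  using assms(3)
proof (induct k arbitrary: w)
  case (Suc k)
  then have "matpow X (Suc k) *v w = c *s (c ^ k *s (matpow M k *v (M *v w)))"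
    using assms(1,2) by (simp add: matpow_Suc_vector vector_scalar_commute)
  then show ?case
    by (simp add: matpow_Suc_vector vector_smult_assoc mult.commute)
qed simp

lemma nilpotent_on_invariant:
  fixes X N :: "'a::field^'n^'n"
  assumes "nilpotent_mat N" "\<forall>w\<in>S. X *v w = c *s (N *v w)" "\<forall>w\<in>S. N *v w \<in> S" "v \<in> S"
  shows "\<exists>k. matpow X k *v v = 0"
proof -
  obtain k where "matpow N k = 0"
    using assms(1) by (auto simp: nilpotent_mat_iff_matpow)
  then have "matpow X k *v v = 0"
    using matpow_vector_on_invariant[OF assms(2-4)] by simp
  then show ?thesis ..
qed

lemma nilpotent_mat_eigenvalue:
  fixes N :: "'a::field^'n^'n"
  assumes "nilpotent_mat N" "N *v u = c *s u" "u \<noteq> 0"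
  shows "c = 0"
proof -
  obtain k where "matpow N k = 0"
    using assms(1) by (auto simp: nilpotent_mat_iff_matpow)
  moreover have "matpow N k *v u = c ^ k *s (matpow (mat 1) k *v u)"
    by (rule matpow_vector_on_invariant[of "{u}"]) (simp_all add: assms(2))
  moreover have "matpow (mat 1 :: 'a^'n^'n) k = mat 1"
    by (induct k) (simp_all add: matpow_Suc)
  ultimately show ?thesis
    using assms(3) by simp
qed

lemma unipotent_on_joint_eigenvector:
  fixes D D' U :: "'a::field^'n^'n"
  assumes U: "unipotent U" "D ** U = U ** D" "D' ** U = U ** D'"
    and w: "D *v w = \<mu> *s w" "D' *v w = \<nu> *s w"
  shows "\<exists>k. matpow (D ** D' ** U - mat (\<mu> * \<nu>)) k *v w = 0"
proof (rule nilpotent_on_invariant)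
  define S where "S = {u. D *v u = \<mu> *s u \<and> D' *v u = \<nu> *s u}"
  have S_closed: "M *v u \<in> S" if "u \<in> S" "D ** M = M ** D" "D' ** M = M ** D'" for M u
  proof -
    have "D *v (M *v u) = M *v (D *v u)" "D' *v (M *v u) = M *v (D' *v u)"
      by (simp_all add: matrix_vector_mul_assoc that(2,3))
    then show ?thesis
      using that(1) by (simp add: S_def vector_scalar_commute)
  qed
  show "nilpotent_mat (U - mat 1)"
    using U(1) by (simp add: unipotent_def)
  show "\<forall>u\<in>S. (D ** D' ** U - mat (\<mu> * \<nu>)) *v u = (\<mu> * \<nu>) *s ((U - mat 1) *v u)"
  proof
    fix u
    assume "u \<in> S"
    then have "U *v u \<in> S"
      using S_closed U(2,3) by blast
    then have "(D ** D' ** U) *v u = (\<mu> * \<nu>) *s (U *v u)"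
      by (simp add: S_def vector_scalar_commute vector_smult_assoc mult.commute
          flip: matrix_vector_mul_assoc)
    then show "(D ** D' ** U - mat (\<mu> * \<nu>)) *v u = (\<mu> * \<nu>) *s ((U - mat 1) *v u)"
      by (simp add: mat_diff_matrix_vector_mult vector_ssub_ldistrib)
  qed
  show "\<forall>u\<in>S. (U - mat 1) *v u \<in> S"
    using S_closed matrix_mult_commute_diff_mat U(2,3) by metis
  show "w \<in> S"
    using w by (simp add: S_def)
qed

section \<open>Spectral projections of diagonalizable matrices\<close>

definition diag_mat :: "('n \<Rightarrow> 'a::zero) \<Rightarrow> 'a^'n^'n" where
  "diag_mat d = (\<chi> i j. if i = j then d i else 0)"

lemma diag_mat_nth [simp]: "diag_mat d $ i $ j = (if i = j then d i else 0)"
  by (simp add: diag_mat_def)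

lemma matrix_mult_diag_mat: "(M::'a::semiring_1^'n^'m) ** diag_mat d = (\<chi> i j. M$i$j * d j)"
  by (simp add: matrix_matrix_mult_def vec_eq_iff if_distrib if_distribR cong: if_cong)

lemma diag_mat_matrix_mult: "diag_mat d ** (M::'a::semiring_1^'m^'n) = (\<chi> i j. d i * M$i$j)"
  by (simp add: matrix_matrix_mult_def vec_eq_iff if_distrib if_distribR cong: if_cong)

lemma diag_mat_vector_mult: "diag_mat d *v (v::'a::semiring_1^'n) = (\<chi> i. d i * v$i)"
  by (simp add: matrix_vector_mult_def vec_eq_iff if_distrib if_distribR cong: if_cong)

definition spectral_decomp :: "'a::field^'n^'n \<Rightarrow> 'a set \<Rightarrow> ('a \<Rightarrow> 'a^'n^'n) \<Rightarrow> bool" where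
  "spectral_decomp D \<Lambda> Pr \<longleftrightarrow> finite \<Lambda> \<and> (\<forall>v. (\<Sum>\<nu>\<in>\<Lambda>. Pr \<nu> *v v) = v) \<and>
     (\<forall>\<nu> v. D *v (Pr \<nu> *v v) = \<nu> *s (Pr \<nu> *v v)) \<and>
     (\<forall>Y \<nu>. Y ** D = D ** Y \<longrightarrow> Y ** Pr \<nu> = Pr \<nu> ** Y)"

lemma spectral_decomp_diag_mat:
  fixes d :: "'n::finite \<Rightarrow> 'a::field"
  shows "spectral_decomp (diag_mat d) (range d) (\<lambda>\<nu>. diag_mat (\<lambda>i. if d i = \<nu> then 1 else 0))"
  unfolding spectral_decomp_def
proof (intro conjI allI impI)
  fix v :: "'a^'n"
  have "(\<Sum>\<nu>\<in>range d. (if d i = \<nu> then 1 else 0) * v$i) = v$i" for i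
  proof -
    have "(\<Sum>\<nu>\<in>range d. (if d i = \<nu> then 1 else 0) * v$i) = (\<Sum>\<nu>\<in>range d. if d i = \<nu> then v$i else 0)"
      by (intro sum.cong) auto
    then show ?thesis by simp
  qed
  then show "(\<Sum>\<nu>\<in>range d. diag_mat (\<lambda>i. if d i = \<nu> then 1 else 0) *v v) = v"
    by (simp add: vec_eq_iff diag_mat_vector_mult)
next
  fix Y :: "'a^'n^'n" and \<nu>
  assume "Y ** diag_mat d = diag_mat d ** Y"
  then have "Y$i$j * d j = d i * Y$i$j" for i j
    by (simp add: matrix_mult_diag_mat diag_mat_matrix_mult vec_eq_iff)
  then have "Y$i$j * (d j - d i) = 0" for i j
    by (simp add: right_diff_distrib mult.commute)
  then have "Y$i$j = 0" if "d i \<noteq> d j" for i j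
    using that by (metis eq_iff_diff_eq_0 mult_eq_0_iff)
  then show "Y ** diag_mat (\<lambda>i. if d i = \<nu> then 1 else 0) = diag_mat (\<lambda>i. if d i = \<nu> then 1 else 0) ** Y"
    by (auto simp: matrix_mult_diag_mat diag_mat_matrix_mult vec_eq_iff)
qed (auto simp: diag_mat_vector_mult vec_eq_iff)

lemma spectral_decomp_similar:
  assumes L: "spectral_decomp L \<Lambda> E" and PQ: "P ** Q = mat 1" and QP: "Q ** P = mat 1"
  shows "spectral_decomp (P ** L ** Q) \<Lambda> (\<lambda>\<nu>. P ** E \<nu> ** Q)"
proof -
  have fin: "finite \<Lambda>" and sum: "\<And>v. (\<Sum>\<nu>\<in>\<Lambda>. E \<nu> *v v) = v"
    and eig: "\<And>\<nu> v. L *v (E \<nu> *v v) = \<nu> *s (E \<nu> *v v)"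
    and comm: "\<And>Y \<nu>. Y ** L = L ** Y \<Longrightarrow> Y ** E \<nu> = E \<nu> ** Y"
    using L by (auto simp: spectral_decomp_def)
  show ?thesis
    unfolding spectral_decomp_def
  proof (intro conjI allI impI)
    show "finite \<Lambda>" by (fact fin)
    fix v
    have "(\<Sum>\<nu>\<in>\<Lambda>. (P ** E \<nu> ** Q) *v v) = P *v (\<Sum>\<nu>\<in>\<Lambda>. E \<nu> *v (Q *v v))"
      by (simp add: matrix_vector_mult_sum[OF fin] flip: matrix_vector_mul_assoc)
    also have "\<dots> = v"
      by (simp add: sum) (simp add: matrix_vector_mul_assoc PQ)
    finally show "(\<Sum>\<nu>\<in>\<Lambda>. (P ** E \<nu> ** Q) *v v) = v" .
  next
    fix \<nu> v
    have "(P ** L ** Q) *v ((P ** E \<nu> ** Q) *v v) = (P ** L ** (Q ** P) ** E \<nu> ** Q) *v v"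
      by (simp add: matrix_vector_mul_assoc matrix_mul_assoc)
    also have "\<dots> = P *v (L *v (E \<nu> *v (Q *v v)))"
      by (simp add: QP matrix_vector_mul_assoc matrix_mul_assoc)
    also have "\<dots> = \<nu> *s ((P ** E \<nu> ** Q) *v v)"
      by (simp add: eig vector_scalar_commute) (simp add: matrix_vector_mul_assoc matrix_mul_assoc)
    finally show "(P ** L ** Q) *v ((P ** E \<nu> ** Q) *v v) = \<nu> *s ((P ** E \<nu> ** Q) *v v)" .
  next
    fix Y \<nu>
    assume Y: "Y ** (P ** L ** Q) = P ** L ** Q ** Y"
    have "(Q ** Y ** P) ** L = Q ** (Y ** (P ** L ** Q)) ** P"
      by (simp add: matrix_mul_assoc) (simp add: QP flip: matrix_mul_assoc)
    also have "\<dots> = L ** (Q ** Y ** P)"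
      unfolding Y by (simp add: matrix_mul_assoc QP)
    finally have "Q ** Y ** P ** E \<nu> = E \<nu> ** (Q ** Y ** P)"
      by (rule comm)
    then have "P ** (Q ** Y ** P ** E \<nu>) ** Q = P ** (E \<nu> ** (Q ** Y ** P)) ** Q"
      by simp
    then show "Y ** (P ** E \<nu> ** Q) = P ** E \<nu> ** Q ** Y"
      by (simp add: matrix_mul_assoc PQ) (simp add: PQ flip: matrix_mul_assoc)
  qed
qed

lemma diagonalizable_C_spectral_decomp:
  fixes D :: "complex^'n^'n"
  assumes "diagonalizable_C D"
  obtains \<Lambda> Pr where "spectral_decomp D \<Lambda> Pr"
proof -
  obtain P L :: "complex^'n^'n" where P: "invertible P" and L: "\<forall>i j. i \<noteq> j \<longrightarrow> L $ i $ j = 0"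
    and D: "D = P ** L ** matrix_inv P"
    using assms unfolding diagonalizable_C_def by blast
  define d where "d i = L$i$i" for i
  have "L = diag_mat d"
    using L by (auto simp: vec_eq_iff d_def)
  then have "spectral_decomp L (range d) (\<lambda>\<nu>. diag_mat (\<lambda>i. if d i = \<nu> then 1 else 0))"
    by (simp add: spectral_decomp_diag_mat)
  from spectral_decomp_similar[OF this matrix_inv_right[OF P] matrix_inv_left[OF P]] that
  show ?thesis by (simp add: D)
qed

lemma spectral_decomp_vector_eq:
  assumes "spectral_decomp D \<Lambda> Pr" "\<And>\<nu>. F *v (Pr \<nu> *v v) = G *v (Pr \<nu> *v v)"
  shows "F *v v = G *v v"
proof -
  have fin: "finite \<Lambda>" and sum: "(\<Sum>\<nu>\<in>\<Lambda>. Pr \<nu> *v v) = v"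
    using assms(1) by (auto simp: spectral_decomp_def)
  show ?thesis
    by (subst (1 2) sum[symmetric]) (simp add: matrix_vector_mult_sum[OF fin] assms(2))
qed

lemma matrix_eq_on_eigenvectors:
  fixes D F G :: "complex^'n^'n"
  assumes "diagonalizable_C D" "\<And>\<nu> v. D *v v = \<nu> *s v \<Longrightarrow> F *v v = G *v v"
  shows "F = G"
proof -
  obtain \<Lambda> Pr where Pr: "spectral_decomp D \<Lambda> Pr"
    using assms(1) diagonalizable_C_spectral_decomp by blast
  have "F *v v = G *v v" for v
  proof (rule spectral_decomp_vector_eq[OF Pr])
    fix \<nu>
    have "D *v (Pr \<nu> *v v) = \<nu> *s (Pr \<nu> *v v)"
      using Pr by (simp add: spectral_decomp_def)
    then show "F *v (Pr \<nu> *v v) = G *v (Pr \<nu> *v v)"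
      by (rule assms(2))
  qed
  then show ?thesis by (simp add: matrix_eq)
qed

lemma matrix_eq_on_joint_eigenvectors:
  fixes D D' F G :: "complex^'n^'n"
  assumes "diagonalizable_C D" "diagonalizable_C D'" "D ** D' = D' ** D"
    and "\<And>\<mu> \<nu> w. D *v w = \<mu> *s w \<Longrightarrow> D' *v w = \<nu> *s w \<Longrightarrow> F *v w = G *v w"
  shows "F = G"
proof (rule matrix_eq_on_eigenvectors[OF assms(1)])
  fix \<mu> v
  assume v: "D *v v = \<mu> *s v"
  obtain \<Lambda> Pr where Pr: "spectral_decomp D' \<Lambda> Pr"
    using assms(2) diagonalizable_C_spectral_decomp by blast
  show "F *v v = G *v v"
  proof (rule spectral_decomp_vector_eq[OF Pr])
    fix \<nu>
    have "D ** Pr \<nu> = Pr \<nu> ** D"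
      using Pr assms(3) by (simp add: spectral_decomp_def)
    then have "D *v (Pr \<nu> *v v) = Pr \<nu> *v (D *v v)"
      by (simp add: matrix_vector_mul_assoc)
    then have "D *v (Pr \<nu> *v v) = \<mu> *s (Pr \<nu> *v v)"
      by (simp add: v vector_scalar_commute)
    moreover have "D' *v (Pr \<nu> *v v) = \<nu> *s (Pr \<nu> *v v)"
      using Pr by (simp add: spectral_decomp_def)
    ultimately show "F *v (Pr \<nu> *v v) = G *v (Pr \<nu> *v v)"
      by (rule assms(4))
  qed
qed

section \<open>The multiplicative Jordan--Chevalley decomposition over \<open>\<complex>\<close>\<close>

abbreviation complex_JC_decomp :: "complex^'n^'n \<Rightarrow> complex^'n^'n \<Rightarrow> complex^'n^'n \<Rightarrow> bool" where
  "complex_JC_decomp \<equiv> mult_JC_decomp (\<lambda>z. z)"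

lemma complex_JC_decomp_iff:
  "complex_JC_decomp A D T \<longleftrightarrow> diagonalizable_C D \<and> unipotent T \<and> D ** T = T ** D \<and> A = D ** T"
  by (simp add: mult_JC_decomp_def map_mat_def)

lemma complex_JC_eigenvector_generalized:
  assumes J: "complex_JC_decomp A D T" and v: "D *v v = \<mu> *s v"
  shows "\<exists>k. matpow (A - mat \<mu>) k *v v = 0"
proof -
  have "unipotent T" "D ** T = T ** D" "mat 1 ** T = T ** mat 1" and A: "A = D ** mat 1 ** T"
    using J by (auto simp: complex_JC_decomp_iff)
  from unipotent_on_joint_eigenvector[OF this(1-3) v, of 1] show ?thesis
    by (simp add: A)
qed

lemma complex_JC_eigenvalues_eq:
  assumes J: "complex_JC_decomp A D T"
    and u: "D *v u = \<nu> *s u" "A *v u = \<mu> *s u" "u \<noteq> 0"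
  shows "\<nu> = \<mu>"
proof -
  have DT: "D ** T = T ** D" and A: "A = D ** T" and "unipotent T"
    using J by (auto simp: complex_JC_decomp_iff)
  have "\<mu> *s u = T *v (D *v u)"
    using u(2) by (simp add: A DT matrix_vector_mul_assoc)
  then have Tu: "\<nu> *s (T *v u) = \<mu> *s u"
    by (simp add: u(1) vector_scalar_commute)
  show ?thesis
  proof (cases "\<nu> = 0")
    case True
    then show ?thesis using Tu u(3) by simp
  next
    case False
    then have "T *v u = (\<mu> / \<nu>) *s u"
      using arg_cong[OF Tu, of "(*s) (1 / \<nu>)"] by (simp add: vector_smult_assoc)
    then have "(T - mat 1) *v u = (\<mu> / \<nu> - 1) *s u"
      by (simp add: mat_diff_matrix_vector_mult vector_sub_rdistrib)
    moreover have "nilpotent_mat (T - mat 1)"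
      using \<open>unipotent T\<close> by (simp add: unipotent_def)
    ultimately have "\<mu> / \<nu> - 1 = 0"
      using nilpotent_mat_eigenvalue u(3) by blast
    then show ?thesis
      using False by simp
  qed
qed

lemma complex_JC_generalized_eigenvector_zero:
  assumes J: "complex_JC_decomp A D T" and "\<nu> \<noteq> \<mu>"
  shows "D *v u = \<nu> *s u \<Longrightarrow> matpow (A - mat \<mu>) k *v u = 0 \<Longrightarrow> u = 0"
proof (induct k arbitrary: u)
  case (Suc k)
  have "A ** D = D ** A"
    using J by (auto simp: complex_JC_decomp_iff matrix_mul_assoc)
  then have "D *v ((A - mat \<mu>) *v u) = (A - mat \<mu>) *v (D *v u)"
    by (simp add: matrix_vector_mul_assoc matrix_mult_commute_diff_mat)
  then have "D *v ((A - mat \<mu>) *v u) = \<nu> *s ((A - mat \<mu>) *v u)"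
    by (simp add: Suc.prems(1) vector_scalar_commute)
  moreover have "matpow (A - mat \<mu>) k *v ((A - mat \<mu>) *v u) = 0"
    using Suc.prems(2) by (simp add: matpow_Suc_vector)
  ultimately have "(A - mat \<mu>) *v u = 0"
    by (rule Suc.hyps)
  then have "A *v u = \<mu> *s u"
    by (simp add: mat_diff_matrix_vector_mult)
  then show "u = 0"
    using complex_JC_eigenvalues_eq[OF J Suc.prems(1)] \<open>\<nu> \<noteq> \<mu>\<close> by blast
qed simp

lemma complex_JC_generalized_eigenvector:
  assumes J: "complex_JC_decomp A D T" and v: "matpow (A - mat \<mu>) k *v v = 0"
  shows "D *v v = \<mu> *s v"
proof -
  obtain \<Lambda> Pr where Pr: "spectral_decomp D \<Lambda> Pr"
    using J diagonalizable_C_spectral_decomp by (auto simp: complex_JC_decomp_iff)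
  then have fin: "finite \<Lambda>" and sum: "\<And>v. (\<Sum>\<nu>\<in>\<Lambda>. Pr \<nu> *v v) = v"
    and eig: "\<And>\<nu> v. D *v (Pr \<nu> *v v) = \<nu> *s (Pr \<nu> *v v)"
    and comm: "\<And>Y \<nu>. Y ** D = D ** Y \<Longrightarrow> Y ** Pr \<nu> = Pr \<nu> ** Y"
    by (auto simp: spectral_decomp_def)
  have "D ** A = A ** D"
    using J by (auto simp: complex_JC_decomp_iff matrix_mul_assoc)
  then have "D ** matpow (A - mat \<mu>) k = matpow (A - mat \<mu>) k ** D"
    by (intro matpow_commute matrix_mult_commute_diff_mat)
  then have "matpow (A - mat \<mu>) k ** Pr \<nu> = Pr \<nu> ** matpow (A - mat \<mu>) k" for \<nu>
    by (intro comm) simp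
  then have "matpow (A - mat \<mu>) k *v (Pr \<nu> *v v) = Pr \<nu> *v (matpow (A - mat \<mu>) k *v v)" for \<nu>
    by (simp add: matrix_vector_mul_assoc)
  then have "matpow (A - mat \<mu>) k *v (Pr \<nu> *v v) = 0" for \<nu>
    by (simp add: v)
  then have "Pr \<nu> *v v = 0" if "\<nu> \<noteq> \<mu>" for \<nu>
    using complex_JC_generalized_eigenvector_zero[OF J that eig] by blast
  then have "D *v (Pr \<nu> *v v) = \<mu> *s (Pr \<nu> *v v)" for \<nu>
    using eig[of \<nu> v] by (cases "\<nu> = \<mu>") simp_all
  then show ?thesis
    by (subst (1 2) sum[of v, symmetric]) (simp add: matrix_vector_mult_sum[OF fin] sum_cmul)
qed

lemma complex_JC_eigenvector_iff:
  "complex_JC_decomp A D T \<Longrightarrow> D *v v = \<mu> *s v \<longleftrightarrow> (\<exists>k. matpow (A - mat \<mu>) k *v v = 0)"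
  using complex_JC_eigenvector_generalized complex_JC_generalized_eigenvector by blast

lemma complex_JC_invertible:
  assumes "complex_JC_decomp A D T" "invertible A"
  shows "invertible D"
proof -
  obtain B where "A ** B = mat 1"
    using assms(2) by (auto simp: invertible_def)
  then have "D ** (T ** B) = mat 1"
    using assms(1) by (simp add: complex_JC_decomp_iff matrix_mul_assoc)
  then show ?thesis
    by (auto simp: invertible_right_inverse)
qed

lemma complex_JC_commute:
  assumes J: "complex_JC_decomp A D T" and A: "invertible A" and XA: "X ** A = A ** X"
  shows "X ** D = D ** X" "X ** T = T ** X"
proof -
  have A_eq: "A = D ** T" and "diagonalizable_C D"
    using J by (auto simp: complex_JC_decomp_iff)
  show XD: "X ** D = D ** X"
  proof (rule matrix_eq_on_eigenvectors[OF \<open>diagonalizable_C D\<close>])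
    fix \<nu> v
    assume v: "D *v v = \<nu> *s v"
    then obtain k where k: "matpow (A - mat \<nu>) k *v v = 0"
      using complex_JC_eigenvector_iff[OF J] by blast
    have "X ** matpow (A - mat \<nu>) k = matpow (A - mat \<nu>) k ** X"
      by (intro matpow_commute matrix_mult_commute_diff_mat XA)
    then have "matpow (A - mat \<nu>) k *v (X *v v) = 0"
      by (metis matrix_vector_mul_assoc matrix_vector_mult_0_right k)
    then have "D *v (X *v v) = \<nu> *s (X *v v)"
      using complex_JC_eigenvector_iff[OF J] by blast
    then show "(X ** D) *v v = (D ** X) *v v"
      by (simp add: v vector_scalar_commute flip: matrix_vector_mul_assoc)
  qed
  have "D ** (X ** T) = D ** (T ** X)"
    using XA by (simp add: A_eq matrix_mul_assoc XD)
  then show "X ** T = T ** X"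
    using complex_JC_invertible[OF J A] invertible_mult_left_cancel by blast
qed

lemma complex_JC_unique:
  assumes J1: "complex_JC_decomp A D1 T1" and J2: "complex_JC_decomp A D2 T2" and A: "invertible A"
  shows "D1 = D2 \<and> T1 = T2"
proof -
  have D: "D1 = D2"
  proof (rule matrix_eq_on_eigenvectors)
    show "diagonalizable_C D1"
      using J1 by (simp add: complex_JC_decomp_iff)
    show "D1 *v v = D2 *v v" if "D1 *v v = \<nu> *s v" for \<nu> v
      using that complex_JC_eigenvector_iff[OF J1] complex_JC_eigenvector_iff[OF J2] by metis
  qed
  then have "D1 ** T1 = D1 ** T2"
    using J1 J2 by (simp add: complex_JC_decomp_iff)
  then show ?thesis
    using D complex_JC_invertible[OF J1 A] invertible_mult_left_cancel by blast
qed

lemma complex_JC_mat_1: "complex_JC_decomp (mat 1) (mat 1) (mat 1 :: complex^'n^'n)"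
proof -
  have "invertible (mat 1 :: complex^'n^'n)"
    by (auto simp: invertible_def)
  moreover from this have "matrix_inv (mat 1 :: complex^'n^'n) = mat 1"
    using matrix_inv_right by fastforce
  moreover have "\<forall>i j. i \<noteq> j \<longrightarrow> (mat 1 :: complex^'n^'n) $ i $ j = 0"
    by (simp add: mat_def)
  ultimately have "diagonalizable_C (mat 1 :: complex^'n^'n)"
    unfolding diagonalizable_C_def by (intro exI[of _ "mat 1"] conjI) simp_all
  moreover have "unipotent (mat 1 :: complex^'n^'n)"
    unfolding unipotent_def nilpotent_mat_iff_matpow by (auto intro: exI[of _ 1] simp: matpow_Suc)
  ultimately show ?thesis
    by (simp add: complex_JC_decomp_iff)
qed

lemma complex_JC_factors_commute:
  assumes JA: "complex_JC_decomp A D T" and JB: "complex_JC_decomp B D' T'"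
    and AB: "A ** B = B ** A" and A: "invertible A" and B: "invertible B"
  shows "D ** D' = D' ** D" "D ** T' = T' ** D" "T ** D' = D' ** T" "T ** T' = T' ** T"
proof -
  have "B ** D = D ** B" "B ** T = T ** B"
    using complex_JC_commute[OF JA A] AB by simp_all
  then show "D ** D' = D' ** D" "D ** T' = T' ** D" "T ** D' = D' ** T" "T ** T' = T' ** T"
    using complex_JC_commute[OF JB B] by metis+
qed

lemma complex_JC_mult:
  assumes JA: "complex_JC_decomp A D T" and JB: "complex_JC_decomp B D' T'"
    and JAB: "complex_JC_decomp (A ** B) E U"
    and AB: "A ** B = B ** A" and A: "invertible A" and B: "invertible B"
  shows "E = D ** D' \<and> U = T ** T'"
proof -
  note comm = complex_JC_factors_commute[OF JA JB AB A B]
  have DT: "D ** T = T ** D" and D'T': "D' ** T' = T' ** D'"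
    and diag: "diagonalizable_C D" "diagonalizable_C D'" and uni: "unipotent T" "unipotent T'"
    and A_eq: "A = D ** T" and B_eq: "B = D' ** T'"
    using JA JB by (auto simp: complex_JC_decomp_iff)
  have AB_eq: "A ** B = (D ** D') ** (T ** T')"
    by (simp add: A_eq B_eq matrix_mul_assoc) (simp add: comm(3) flip: matrix_mul_assoc)
  have TT'_D: "D ** (T ** T') = (T ** T') ** D"
    by (simp add: DT matrix_mul_assoc) (simp add: comm(2) flip: matrix_mul_assoc)
  have "D' ** (T ** T') = (T ** D') ** T'"
    by (simp add: comm(3) matrix_mul_assoc)
  also have "\<dots> = (T ** T') ** D'"
    by (simp add: D'T' flip: matrix_mul_assoc)
  finally have TT'_D': "D' ** (T ** T') = (T ** T') ** D'" .
  have TT': "unipotent (T ** T')"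
    using unipotent_mult[OF comm(4) uni] .
  have E: "E = D ** D'"
  proof (rule matrix_eq_on_joint_eigenvectors[OF diag comm(1)])
    fix \<mu> \<nu> w
    assume w: "D *v w = \<mu> *s w" "D' *v w = \<nu> *s w"
    then have "\<exists>k. matpow (A ** B - mat (\<mu> * \<nu>)) k *v w = 0"
      using unipotent_on_joint_eigenvector[OF TT' TT'_D TT'_D'] by (simp add: AB_eq matrix_mul_assoc)
    then have "E *v w = (\<mu> * \<nu>) *s w"
      using complex_JC_eigenvector_iff[OF JAB] by blast
    then show "E *v w = (D ** D') *v w"
      by (simp add: w vector_scalar_commute vector_smult_assoc mult.commute
          flip: matrix_vector_mul_assoc)
  qed
  have "E ** U = E ** (T ** T')"
    using JAB by (simp add: complex_JC_decomp_iff AB_eq E)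
  then show ?thesis
    using E complex_JC_invertible[OF JAB invertible_mult[OF A B]] invertible_mult_left_cancel by blast
qed

section \<open>Complexification of real matrices\<close>

abbreviation complexify :: "real^'n^'m \<Rightarrow> complex^'n^'m" where
  "complexify \<equiv> map_mat complex_of_real"

lemma complexify_mult: "complexify (A ** B) = complexify A ** complexify B"
  by (simp add: map_mat_def matrix_matrix_mult_def vec_eq_iff)

lemma complexify_mat: "complexify (mat c) = mat (complex_of_real c)"
  by (simp add: map_mat_def mat_def vec_eq_iff)

lemma complexify_diff: "complexify (A - B) = complexify A - complexify B"
  by (simp add: map_mat_def vec_eq_iff)

lemma complexify_eq_iff: "complexify A = complexify B \<longleftrightarrow> A = B"
  by (simp add: map_mat_def vec_eq_iff)

lemma complexify_matpow: "complexify (matpow N k) = matpow (complexify N) k"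
  by (induct k) (simp_all add: matpow_Suc complexify_mult complexify_mat)

lemma complexify_invertible: "invertible A \<Longrightarrow> invertible (complexify A)"
  unfolding invertible_def by (metis complexify_mult complexify_mat of_real_1)

lemma complexify_unipotent: "unipotent T \<Longrightarrow> unipotent (complexify T)"
  unfolding unipotent_def nilpotent_mat_iff_matpow
  by (metis complexify_matpow complexify_diff complexify_mat of_real_0 of_real_1 mat_0)

lemma complex_JC_decomp_complexify:
  "mult_JC_decomp complex_of_real A D T \<Longrightarrow> complex_JC_decomp (complexify A) (complexify D) (complexify T)"
  unfolding complex_JC_decomp_iff
  by (auto simp: mult_JC_decomp_def complexify_unipotent simp flip: complexify_mult)

lemma is_semigroup_complexify_iff: "is_semigroup (\<lambda>x. complexify (g x)) \<longleftrightarrow> is_semigroup g"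
  by (simp add: is_semigroup_def complexify_mat flip: complexify_mult complexify_eq_iff)

theorem complex_JC_semigroup:
  fixes g D T :: "real \<Rightarrow> complex^'n^'n"
  assumes g: "is_semigroup g" and inv: "\<forall>x\<ge>0. invertible (g x)"
    and J: "\<forall>x\<ge>0. complex_JC_decomp (g x) (D x) (T x)"
  shows "is_semigroup D \<and> is_semigroup T \<and> (\<forall>x y. 0 \<le> x \<longrightarrow> 0 \<le> y \<longrightarrow> T x ** D y = D y ** T x)"
proof -
  have g_add: "g (x + y) = g x ** g y" and g_comm: "g x ** g y = g y ** g x"
    if "0 \<le> x" "0 \<le> y" for x y
    using g that unfolding is_semigroup_def by (metis add.commute)+
  have "complex_JC_decomp (mat 1) (D 0) (T 0)" and "invertible (mat 1 :: complex^'n^'n)"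
    using g J inv by (auto simp: is_semigroup_def)
  then have "D 0 = mat 1 \<and> T 0 = mat 1"
    using complex_JC_unique complex_JC_mat_1 by blast
  moreover have "D (x + y) = D x ** D y \<and> T (x + y) = T x ** T y" if "0 \<le> x" "0 \<le> y" for x y
  proof (rule complex_JC_mult)
    show "complex_JC_decomp (g x ** g y) (D (x + y)) (T (x + y))"
      using J g_add that by (metis add_nonneg_nonneg)
  qed (use that J inv g_comm in auto)
  moreover have "T x ** D y = D y ** T x" if "0 \<le> x" "0 \<le> y" for x y
    using that J inv g_comm complex_JC_factors_commute(2)[of "g y" "D y" "T y" "g x" "D x" "T x"] by auto
  ultimately show ?thesis
    by (simp add: is_semigroup_def)
qed

theorem mainTheorem7:
  shows "(\<forall>(g::real \<Rightarrow> real^'n^'n) D T.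
            is_semigroup g \<and> (\<forall>x\<ge>0. invertible (g x)) \<and>
            (\<forall>x\<ge>0. mult_JC_decomp complex_of_real (g x) (D x) (T x))
          \<longrightarrow> is_semigroup D \<and> is_semigroup T \<and>
              (\<forall>x y. 0 \<le> x \<longrightarrow> 0 \<le> y \<longrightarrow> T x ** D y = D y ** T x))
       \<and> (\<forall>(g::real \<Rightarrow> complex^'n^'n) D T.
            is_semigroup g \<and> (\<forall>x\<ge>0. invertible (g x)) \<and>
            (\<forall>x\<ge>0. mult_JC_decomp (\<lambda>z. z) (g x) (D x) (T x))
          \<longrightarrow> is_semigroup D \<and> is_semigroup T \<and>
              (\<forall>x y. 0 \<le> x \<longrightarrow> 0 \<le> y \<longrightarrow> T x ** D y = D y ** T x))"
proof (rule conjI; intro allI impI)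
  fix g D T :: "real \<Rightarrow> real^'n^'n"
  assume "is_semigroup g \<and> (\<forall>x\<ge>0. invertible (g x)) \<and>
    (\<forall>x\<ge>0. mult_JC_decomp complex_of_real (g x) (D x) (T x))"
  then have "is_semigroup (\<lambda>x. complexify (D x)) \<and> is_semigroup (\<lambda>x. complexify (T x)) \<and>
      (\<forall>x y. 0 \<le> x \<longrightarrow> 0 \<le> y \<longrightarrow> complexify (T x) ** complexify (D y) = complexify (D y) ** complexify (T x))"
    by (intro complex_JC_semigroup[where g = "\<lambda>x. complexify (g x)"])
      (simp_all add: is_semigroup_complexify_iff complexify_invertible complex_JC_decomp_complexify)
  then show "is_semigroup D \<and> is_semigroup T \<and> (\<forall>x y. 0 \<le> x \<longrightarrow> 0 \<le> y \<longrightarrow> T x ** D y = D y ** T x)"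
    by (simp add: is_semigroup_complexify_iff flip: complexify_mult complexify_eq_iff)
qed (use complex_JC_semigroup in blast)

end
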